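(* Let $n=2$, $K\in\{-1,0,1\}$, and let $k>0$ satisfy $k^2>\max(0,2K)$. Then $-\Delta_{{}^2g}+V_{S,k}$ has trivial $L^2$-kernel on $(\mathbb R^2,{}^2g)$, where, with $m=k^2-2K$, $$V_{S,k}(r)=\frac13\Big(\frac{6\mu}{r^3}+\frac{m}{r^2}+\frac{2m^2(m+3K)+216\mu^2/\ell^2}{(6\mu+mr)^2}\Big).$$
   Context: Fix constants $\ell>0$, $\mu\in\mathbb R$. Set $f(r)=\frac{r^2}{\ell^2}+K-\frac{2\mu}{r}$ (the case $n=2$). Assume $\mu>0$ if $K\in\{0,1\}$ and $\mu>\mu_{\min}:=-\frac{\ell}{3\sqrt3}$ if $K=-1$; let $r_0>0$ be the largest zero of $f$ (simple; $f>0,f'>0$ on $(r_0,\infty)$). Let ${}^2g=f(r)dt^2+f(r)^{-1}dr^2$ on $\mathbb R^2$, with $r\in[r_0,\infty)$, $t$ periodic of period $4\pi/f'(r_0)$, $(r,t)$ polar-type coordinates centred at $r=r_0$ (a smooth complete metric); $\Delta_{{}^2g}=\nabla^a\nabla_a$ on functions. *)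

theory Defs
  imports "HOL-Analysis.Analysis"
begin

definition fBH :: "real \<Rightarrow> real \<Rightarrow> real \<Rightarrow> real \<Rightarrow> real" where
  "fBH ell K mu r = r^2 / ell^2 + K - 2 * mu / r"

definition VSk :: "real \<Rightarrow> real \<Rightarrow> real \<Rightarrow> real \<Rightarrow> real \<Rightarrow> real" where
  "VSk ell K mu k r = (let m = k^2 - 2 * K in
     (6 * mu / r^3 + m / r^2 + (2 * m^2 * (m + 3 * K) + 216 * mu^2 / ell^2) / (6 * mu + m * r)^2) / 3)"

definition tperiod :: "real \<Rightarrow> real \<Rightarrow> real \<Rightarrow> real \<Rightarrow> real" where
  "tperiod ell K mu r0 = 4 * pi / deriv (fBH ell K mu) r0"

text \<open>Proper radial distance from the centre r = r0 (rho = int_{r0}^r f^{-1/2}).\<close>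
definition rho_coord :: "real \<Rightarrow> real \<Rightarrow> real \<Rightarrow> real \<Rightarrow> real \<Rightarrow> real" where
  "rho_coord ell K mu r0 r = (LBINT s=r0..r. 1 / sqrt (fBH ell K mu s))"

text \<open>The global Cartesian chart of R^2 in which (r,t) are polar-type coordinates centred
  at r = r0: angle theta = 2 pi t / period, radius = proper distance rho(r).\<close>
definition polar_chart :: "real \<Rightarrow> real \<Rightarrow> real \<Rightarrow> real \<Rightarrow> real \<times> real \<Rightarrow> real \<times> real" where
  "polar_chart ell K mu r0 p =
     (let r = fst p; t = snd p; \<theta> = 2 * pi * t / tperiod ell K mu r0; \<rho> = rho_coord ell K mu r0 r
      in (\<rho> * cos \<theta>, \<rho> * sin \<theta>))"

definition C2_partials_on ::
  "(real \<times> real) set \<Rightarrow> (real \<times> real \<Rightarrow> real) \<Rightarrow> (real \<times> real \<Rightarrow> real) \<Rightarrow> (real \<times> real \<Rightarrow> real)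
   \<Rightarrow> (real \<times> real \<Rightarrow> real) \<Rightarrow> (real \<times> real \<Rightarrow> real) \<Rightarrow> (real \<times> real \<Rightarrow> real)
   \<Rightarrow> (real \<times> real \<Rightarrow> real) \<Rightarrow> bool" where
  "C2_partials_on S g g1 g2 g11 g12 g21 g22 \<longleftrightarrow>
     open S \<and>
     (\<forall>x y. (x, y) \<in> S \<longrightarrow>
        ((\<lambda>s. g (s, y)) has_real_derivative g1 (x, y)) (at x) \<and>
        ((\<lambda>s. g (x, s)) has_real_derivative g2 (x, y)) (at y) \<and>
        ((\<lambda>s. g1 (s, y)) has_real_derivative g11 (x, y)) (at x) \<and>
        ((\<lambda>s. g1 (x, s)) has_real_derivative g12 (x, y)) (at y) \<and>
        ((\<lambda>s. g2 (s, y)) has_real_derivative g21 (x, y)) (at x) \<and>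
        ((\<lambda>s. g2 (x, s)) has_real_derivative g22 (x, y)) (at y)) \<and>
     continuous_on S g \<and> continuous_on S g1 \<and> continuous_on S g2 \<and>
     continuous_on S g11 \<and> continuous_on S g12 \<and> continuous_on S g21 \<and> continuous_on S g22"

end

theory Submission
  imports Defs
begin

text \<open>
  Restrict a solution to the circles \<open>r = const\<close> of the Euclidean black hole and put
  \<open>E(r) = \<integral> U\<^sup>2 dt\<close>, \<open>G(r) = f \<integral> U (\<partial>\<^sub>r U - psi U) dt\<close> with \<open>psi = 6 mu / (r (6 mu + m r))\<close>.
  The potential has the Riccati form \<open>V = (f psi)' + f psi\<^sup>2 + Q\<close> with \<open>Q \<ge> 0\<close>, so the equation
  gives \<open>G' = \<integral> f (\<partial>\<^sub>r U - psi U)\<^sup>2 + Q U\<^sup>2 + (\<partial>\<^sub>t U)\<^sup>2 / f dt \<ge> 0\<close>. For the weight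
  \<open>a = m + 6 mu / r\<close>, which satisfies \<open>psi = - a' / a\<close>, the quantity \<open>W = a\<^sup>2 E\<close> has
  \<open>W' = 2 a\<^sup>2 G / f\<close>. Since \<open>f\<close> vanishes linearly at the horizon \<open>r0\<close>, a negative value of the
  nondecreasing \<open>G\<close> would make \<open>W\<close> blow up logarithmically at \<open>r0\<close>, against the boundedness
  of \<open>u\<close> near the centre of the disc. Hence \<open>G \<ge> 0\<close>, so \<open>W\<close> is nondecreasing, and square
  integrability forces \<open>W = 0\<close>, i.e. \<open>U = 0\<close>.
\<close>

lemma has_real_derivative_integral_parametric:
  fixes g g' :: "real \<times> real \<Rightarrow> real"
  assumes deriv: "\<And>x t. x > a \<Longrightarrow> ((\<lambda>s. g (s, t)) has_real_derivative g' (x, t)) (at x)"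
    and cont: "continuous_on ({a<..} \<times> UNIV) g" "continuous_on ({a<..} \<times> UNIV) g'"
    and x: "x > a"
  shows "((\<lambda>x. integral {c..d} (\<lambda>t. g (x, t))) has_real_derivative integral {c..d} (\<lambda>t. g' (x, t))) (at x)"
proof -
  have slice: "(\<lambda>t. g (y, t)) integrable_on cbox c d" if "y > a" for y
    using that by (intro integrable_continuous continuous_on_compose2[OF cont(1)])
      (auto intro: continuous_intros)
  have "continuous_on ({a<..} \<times> cbox c d) g'"
    by (rule continuous_on_subset[OF cont(2)]) auto
  then have "continuous_on ({a<..} \<times> cbox c d) (\<lambda>(x, t). g' (x, t))"
    by simp
  then have "((\<lambda>x. integral (cbox c d) (\<lambda>t. g (x, t))) has_field_derivative
      integral (cbox c d) (\<lambda>t. g' (x, t))) (at x within {a<..})"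
    using x slice deriv by (intro leibniz_rule_field_derivative) (auto intro: has_field_derivative_at_within)
  moreover have "at x within {a<..} = at x"
    using x by (intro at_within_open) auto
  ultimately show ?thesis
    by (simp only: cbox_interval)
qed

lemma slice_continuous_on:
  fixes g :: "real \<times> real \<Rightarrow> real"
  assumes "continuous_on ({a<..} \<times> UNIV) g" "r > a"
  shows "continuous_on S (\<lambda>t. g (r, t))"
  using assms by (intro continuous_on_compose2[OF assms(1)]) (auto intro: continuous_intros)

lemma periodic_has_integral_mult_second_deriv:
  fixes v v' v'' :: "real \<Rightarrow> real"
  assumes T: "T \<ge> 0"
    and v: "\<And>t. (v has_real_derivative v' t) (at t)"
    and v': "\<And>t. (v' has_real_derivative v'' t) (at t)"
    and periodic: "\<And>t. v (t + T) = v t"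
  shows "((\<lambda>t. v t * v'' t) has_integral - integral {0..T} (\<lambda>t. (v' t)\<^sup>2)) {0..T}"
proof -
  have "(v has_real_derivative v' T) (at (0 + T))"
    using v by simp
  then have "((\<lambda>t. v (t + T)) has_real_derivative v' T) (at 0)"
    by (rule iffD1[OF DERIV_shift])
  then have v'_periodic: "v' T = v' 0"
    using periodic v DERIV_unique by (metis (no_types) ext)
  have "((\<lambda>t. v t * v' t) has_real_derivative v' t * v' t + v'' t * v t) (at t)" for t
    by (rule DERIV_mult[OF v v'])
  then have "((\<lambda>t. v' t * v' t + v'' t * v t) has_integral v T * v' T - v 0 * v' 0) {0..T}"
    using T by (intro fundamental_theorem_of_calculus)
      (auto simp: has_real_derivative_iff_has_vector_derivative[symmetric] intro: has_field_derivative_at_within)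
  then have total: "((\<lambda>t. (v' t)\<^sup>2 + v t * v'' t) has_integral 0) {0..T}"
    using periodic[of 0] v'_periodic by (simp add: power2_eq_square mult.commute)
  have "continuous_on {0..T} v'"
    using v' by (meson DERIV_isCont continuous_at_imp_continuous_on)
  then have "((\<lambda>t. (v' t)\<^sup>2) has_integral integral {0..T} (\<lambda>t. (v' t)\<^sup>2)) {0..T}"
    by (intro integrable_integral integrable_continuous_interval continuous_intros)
  from has_integral_diff[OF total this] show ?thesis
    by simp
qed

lemma slice_integral_small_somewhere:
  fixes f :: "real \<times> real \<Rightarrow> real"
  assumes int: "f integrable_on ({a<..} \<times> {c..d})"
    and cont: "continuous_on ({a<..} \<times> UNIV) f"
    and nonneg: "\<And>p. f p \<ge> 0"
    and e: "e > 0" and r1: "r1 > a"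
  shows "\<exists>r\<ge>r1. integral {c..d} (\<lambda>t. f (r, t)) < e"
proof (rule ccontr)
  assume "\<not> ?thesis"
  then have lower: "e \<le> integral {c..d} (\<lambda>t. f (r, t))" if "r \<ge> r1" for r
    using that by (meson not_le)
  define R where "R = r1 + integral ({a<..} \<times> {c..d}) f / e + 1"
  have total_nonneg: "integral ({a<..} \<times> {c..d}) f \<ge> 0"
    using int nonneg by (intro integral_nonneg) auto
  then have R: "R > r1"
    unfolding R_def using e by (simp add: add_nonneg_pos)
  have box: "cbox (r1, c) (R, d) \<subseteq> {a<..} \<times> {c..d}"
    using r1 by (auto simp: cbox_Pair_eq)
  have box_cont: "continuous_on (cbox (r1, c) (R, d)) f"
    by (rule continuous_on_subset[OF cont]) (use box in auto)
  have "continuous_on ({r1..R} \<times> cbox c d) f"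
    by (rule continuous_on_subset[OF cont]) (use r1 in auto)
  then have "continuous_on ({r1..R} \<times> cbox c d) (\<lambda>(x, t). f (x, t))"
    by simp
  then have "continuous_on {r1..R} (\<lambda>x. integral {c..d} (\<lambda>t. f (x, t)))"
    unfolding cbox_interval[symmetric] by (rule integral_continuous_on_param)
  then have "integral {r1..R} (\<lambda>_. e) \<le> integral {r1..R} (\<lambda>x. integral {c..d} (\<lambda>t. f (x, t)))"
    using lower by (intro integral_le integrable_continuous_interval) auto
  then have "e * (R - r1) \<le> integral {r1..R} (\<lambda>x. integral {c..d} (\<lambda>t. f (x, t)))"
    using R by (simp add: mult.commute)
  also have "\<dots> = integral (cbox (r1, c) (R, d)) f"
    using integral_prod_continuous[OF box_cont] by (simp add: cbox_interval)
  also have "\<dots> \<le> integral ({a<..} \<times> {c..d}) f"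
    by (rule integral_subset_le[OF box integrable_continuous[OF box_cont] int]) (use nonneg in auto)
  finally have "e * (R - r1) \<le> integral ({a<..} \<times> {c..d}) f" .
  moreover have "e * (R - r1) = integral ({a<..} \<times> {c..d}) f + e"
    unfolding R_def using e by (simp add: field_simps)
  ultimately show False
    using e by linarith
qed

lemma continuous_eq_const_off_point:
  fixes u :: "'a::{perfect_space, t2_space} \<Rightarrow> 'b::t2_space"
  assumes "continuous_on UNIV u" and "\<And>x. x \<noteq> a \<Longrightarrow> u x = c"
  shows "u a = c"
proof -
  have "isCont u a"
    using assms(1) continuous_on_eq_continuous_at[OF open_UNIV] by blast
  then have "(u \<longlongrightarrow> u a) (at a)"
    by (simp add: isCont_def)
  moreover have "(u \<longlongrightarrow> c) (at a)"
    using assms(2) by (intro tendsto_eventually) (simp add: eventually_at_filter)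
  ultimately show ?thesis
    by (rule tendsto_unique[OF at_neq_bot])
qed

lemma inverse_sqrt_has_integral:
  fixes a b c :: real
  assumes c: "c > 0" and ab: "a \<le> b"
  shows "((\<lambda>s. 1 / sqrt (c * (s - a))) has_integral 2 * sqrt (c * (b - a)) / c) {a..b}"
proof -
  have "((\<lambda>s. 2 * sqrt (c * (s - a)) / c) has_real_derivative 1 / sqrt (c * (x - a))) (at x)"
    if "a < x" for x
    using that c by (auto intro!: derivative_eq_intros simp: field_simps)
  then have "((\<lambda>s. 1 / sqrt (c * (s - a))) has_integral
      2 * sqrt (c * (b - a)) / c - 2 * sqrt (c * (a - a)) / c) {a..b}"
    using ab c by (intro fundamental_theorem_of_calculus_interior)
      (auto simp: has_real_derivative_iff_has_vector_derivative[symmetric] intro!: continuous_intros)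
  then show ?thesis
    by simp
qed

lemma riccati_identity:
  fixes f f' \<psi> \<psi>' Q V u ur urr utt :: real
  assumes V: "V = f' * \<psi> + f * \<psi>' + f * \<psi>\<^sup>2 + Q"
    and eq: "- (f' * ur + f * urr + utt / f) + V * u = 0"
  shows "f' * (u * ur - \<psi> * u\<^sup>2) + f * (ur\<^sup>2 + u * urr - \<psi>' * u\<^sup>2 - 2 * \<psi> * u * ur)
    = f * (ur - \<psi> * u)\<^sup>2 + Q * u\<^sup>2 - u * utt / f"
proof -
  have f_urr: "f * urr = V * u - utt / f - f' * ur"
    using eq by linarith
  have "f' * (u * ur - \<psi> * u\<^sup>2) + f * (ur\<^sup>2 + u * urr - \<psi>' * u\<^sup>2 - 2 * \<psi> * u * ur)
      = f' * (u * ur - \<psi> * u\<^sup>2) + f * (ur\<^sup>2 - \<psi>' * u\<^sup>2 - 2 * \<psi> * u * ur) + u * (f * urr)"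
    by (simp add: algebra_simps)
  also have "\<dots> = f * (ur - \<psi> * u)\<^sup>2 + Q * u\<^sup>2 - u * utt / f"
    unfolding f_urr V by (simp add: algebra_simps power2_eq_square)
  finally show ?thesis .
qed

section \<open>A monotonicity argument\<close>

lemma log_lower_bound_if_deriv_le:
  fixes W W' :: "real \<Rightarrow> real"
  assumes deriv: "\<And>x. r0 < x \<Longrightarrow> x \<le> s \<Longrightarrow> (W has_real_derivative W' x) (at x)"
    and bound: "\<And>x. r0 < x \<Longrightarrow> x \<le> s \<Longrightarrow> W' x \<le> - \<beta> / (x - r0)"
    and r: "r0 < r" "r \<le> s"
  shows "W s + \<beta> * (ln (s - r0) - ln (r - r0)) \<le> W r"
proof -
  have "- (W r + \<beta> * ln (r - r0)) \<le> - (W s + \<beta> * ln (s - r0))"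
  proof (rule deriv_nonneg_imp_mono[where g = "\<lambda>x. - (W x + \<beta> * ln (x - r0))"
        and g' = "\<lambda>x. - (W' x + \<beta> * (1 / (x - r0)))"])
    fix x assume x: "x \<in> {r..s}"
    then have "x > r0"
      using r by auto
    then have "((\<lambda>x. ln (x - r0)) has_real_derivative 1 / (x - r0)) (at x)"
      by (auto intro!: derivative_eq_intros)
    then show "((\<lambda>x. - (W x + \<beta> * ln (x - r0))) has_real_derivative
        - (W' x + \<beta> * (1 / (x - r0)))) (at x)"
      using deriv x r by (intro DERIV_minus DERIV_add DERIV_cmult) auto
  next
    fix x assume x: "x \<in> {r..s}"
    show "0 \<le> - (W' x + \<beta> * (1 / (x - r0)))"
      using bound[of x] x r by auto
  qed (use r in auto)
  then show ?thesis
    by (simp add: algebra_simps)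
qed

context
  fixes W G h :: "real \<Rightarrow> real" and r0 :: real
  assumes deriv: "\<And>r. r > r0 \<Longrightarrow> (W has_real_derivative h r * G r) (at r)"
    and h_pos: "\<And>r. r > r0 \<Longrightarrow> h r > 0"
    and G_mono: "\<And>r s. r0 < r \<Longrightarrow> r \<le> s \<Longrightarrow> G r \<le> G s"
begin

lemma mono_factor_nonneg:
  assumes \<delta>: "\<delta> > r0" and \<gamma>: "\<gamma> > 0"
    and h_singular: "\<And>r. r0 < r \<Longrightarrow> r \<le> \<delta> \<Longrightarrow> \<gamma> / (r - r0) \<le> h r"
    and W_bounded: "\<And>r. r0 < r \<Longrightarrow> r \<le> \<delta> \<Longrightarrow> W r \<le> B"
    and r2: "r2 > r0"
  shows "G r2 \<ge> 0"
proof (rule ccontr)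
  assume "\<not> G r2 \<ge> 0"
  define s where "s = min r2 \<delta>"
  have s: "r0 < s" "s \<le> \<delta>" "G s < 0"
    using \<delta> r2 G_mono[of s r2] \<open>\<not> G r2 \<ge> 0\<close> unfolding s_def by auto
  define \<beta> where "\<beta> = - \<gamma> * G s"
  have W'_le: "h r * G r \<le> - \<beta> / (r - r0)" if "r0 < r" "r \<le> s" for r
  proof -
    have "h r * G r \<le> h r * G s"
      using G_mono[of r s] h_pos[of r] that by (simp add: mult_left_mono)
    also have "\<dots> \<le> \<gamma> / (r - r0) * G s"
      using h_singular[of r] that s by (intro mult_right_mono_neg) auto
    finally show ?thesis
      unfolding \<beta>_def by simp
  qed
  define r where "r = r0 + (s - r0) * exp (- ((B - W s) / \<beta>) - 1)"
  have \<beta>: "\<beta> > 0"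
    unfolding \<beta>_def using \<gamma> s by (simp add: mult_pos_neg)
  have "(B - W s) / \<beta> \<ge> 0"
    using W_bounded[OF s(1,2)] \<beta> by simp
  then have "exp (- ((B - W s) / \<beta>) - 1) \<le> 1"
    by (subst exp_le_one_iff) linarith
  then have "(s - r0) * exp (- ((B - W s) / \<beta>) - 1) \<le> s - r0"
    using s by (intro mult_left_le) auto
  moreover have "(s - r0) * exp (- ((B - W s) / \<beta>) - 1) > 0"
    using s by simp
  ultimately have r: "r0 < r" "r \<le> s"
    unfolding r_def by linarith+
  have "ln (s - r0) - ln (r - r0) = (B - W s) / \<beta> + 1"
    unfolding r_def using s by (simp add: ln_mult)
  then have "\<beta> * (ln (s - r0) - ln (r - r0)) = B - W s + \<beta>"
    using \<beta> by (simp add: field_simps)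
  then have "B + \<beta> \<le> W r"
    using log_lower_bound_if_deriv_le[where W' = "\<lambda>r. h r * G r", OF deriv W'_le r] by simp
  then show False
    using W_bounded[of r] r s \<beta> by simp
qed

lemma eq_zero_if_deriv_mono_factor:
  assumes W_nonneg: "\<And>r. r > r0 \<Longrightarrow> W r \<ge> 0"
    and W_small: "\<And>e r. e > 0 \<Longrightarrow> r > r0 \<Longrightarrow> \<exists>s\<ge>r. W s < e"
    and \<delta>: "\<delta> > r0" and \<gamma>: "\<gamma> > 0"
    and h_singular: "\<And>r. r0 < r \<Longrightarrow> r \<le> \<delta> \<Longrightarrow> \<gamma> / (r - r0) \<le> h r"
    and W_bounded: "\<And>r. r0 < r \<Longrightarrow> r \<le> \<delta> \<Longrightarrow> W r \<le> B"
    and r: "r > r0"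
  shows "W r = 0"
proof (rule ccontr)
  assume "W r \<noteq> 0"
  with W_nonneg[OF r] have "W r > 0"
    by simp
  then obtain s where s: "s \<ge> r" "W s < W r"
    using W_small r by blast
  have "W r \<le> W s"
  proof (rule deriv_nonneg_imp_mono[of r s W "\<lambda>r. h r * G r"])
    fix x assume "x \<in> {r..s}"
    then have "x > r0"
      using r by simp
    then show "(W has_real_derivative h x * G x) (at x)" "h x * G x \<ge> 0"
      using deriv h_pos[of x] mono_factor_nonneg[OF \<delta> \<gamma> h_singular W_bounded] by auto
  qed (use s in simp)
  with s show False
    by simp
qed

end

section \<open>The blackening factor and the polar chart\<close>

lemma fBH_has_real_derivative:
  assumes "r \<noteq> 0" "ell \<noteq> 0"
  shows "(fBH ell K mu has_real_derivative 2 * r / ell\<^sup>2 + 2 * mu / r\<^sup>2) (at r)"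
  unfolding fBH_def using assms
  by (auto intro!: derivative_eq_intros simp: power2_eq_square field_simps)

locale bh_background =
  fixes ell mu K k r0 :: real
  assumes ell_pos: "ell > 0"
    and K_range: "K \<in> {-1, 0, 1}"
    and mu_cond: "(K \<in> {0, 1} \<longrightarrow> mu > 0) \<and> (K = -1 \<longrightarrow> mu > - ell / (3 * sqrt 3))"
    and r0_pos: "r0 > 0"
    and r0_zero: "fBH ell K mu r0 = 0"
    and r0_largest: "\<forall>r>r0. fBH ell K mu r > 0"
    and k_pos: "k > 0"
    and k_big: "k^2 > max 0 (2 * K)"
begin

abbreviation "f \<equiv> fBH ell K mu"

abbreviation "T \<equiv> tperiod ell K mu r0"

definition slope :: "real \<Rightarrow> real" where
  "slope r = (r + r0) / ell\<^sup>2 + 2 * mu / (r * r0)"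

lemma f_eq_slope: "r > 0 \<Longrightarrow> f r = (r - r0) * slope r"
proof -
  assume "r > 0"
  then have "f r - f r0 = (r - r0) * slope r"
    using r0_pos ell_pos unfolding fBH_def slope_def by (simp add: field_simps power2_eq_square)
  then show ?thesis
    using r0_zero by simp
qed

lemma f_pos: "r > r0 \<Longrightarrow> f r > 0"
  using r0_largest by simp

lemma slope_continuous_on: "continuous_on {r0..} slope"
  unfolding slope_def using r0_pos ell_pos by (auto intro!: continuous_intros)

lemma deriv_f_horizon: "deriv f r0 = slope r0"
  using fBH_has_real_derivative[of r0 ell] r0_pos ell_pos unfolding slope_def
  by (intro DERIV_imp_deriv) (simp_all add: power2_eq_square)

lemma deriv_f: "r > 0 \<Longrightarrow> deriv f r = 2 * r / ell\<^sup>2 + 2 * mu / r\<^sup>2"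
  using fBH_has_real_derivative[of r ell] ell_pos by (intro DERIV_imp_deriv) auto

lemma f_has_real_derivative: "r > 0 \<Longrightarrow> (f has_real_derivative deriv f r) (at r)"
  using fBH_has_real_derivative[of r ell] ell_pos deriv_f by simp

lemma mu_horizon: "2 * mu = r0 ^ 3 / ell\<^sup>2 + K * r0"
  using r0_zero r0_pos unfolding fBH_def by (simp add: field_simps power2_eq_square power3_eq_cube)

lemma mu_nonpos_imp_K: "mu \<le> 0 \<Longrightarrow> K = -1"
  using mu_cond K_range by auto

text \<open>For \<open>K = -1\<close> the cubic \<open>r * f r\<close> has its critical point at \<open>ell / sqrt 3\<close> and is negative
  there exactly when \<open>mu > - ell / (3 * sqrt 3)\<close>; so \<open>r0 > ell / sqrt 3\<close>, which means \<open>f' r0 > 0\<close>.\<close>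

lemma slope_horizon_pos: "slope r0 > 0"
proof (cases "mu > 0")
  case True
  then show ?thesis
    unfolding slope_def using r0_pos ell_pos by (simp add: add_pos_pos)
next
  case False
  then have K: "K = -1"
    using mu_nonpos_imp_K by simp
  define s where "s = ell / sqrt 3"
  have s: "s > 0" "s\<^sup>2 = ell\<^sup>2 / 3"
    unfolding s_def using ell_pos by (simp_all add: power_divide)
  have "s * f s = s * (s\<^sup>2 / ell\<^sup>2 - 1) - 2 * mu"
    unfolding fBH_def K using s(1) by (simp add: field_simps)
  also have "\<dots> = - 2 * (s / 3 + mu)"
    using s(2) ell_pos by (simp add: field_simps)
  finally have "s * f s < 0"
    using mu_cond K unfolding s_def by simp
  then have "f s < 0"
    using s(1) by (simp add: mult_less_0_iff)
  then have "s < r0"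
    using r0_largest r0_zero by (metis less_asym' linorder_neqE_linordered_idom)
  then have "s\<^sup>2 < r0\<^sup>2"
    using s(1) by (simp add: power_strict_mono)
  then have "ell\<^sup>2 < 3 * r0\<^sup>2"
    using s(2) by simp
  have mu: "2 * mu = r0 ^ 3 / ell\<^sup>2 - r0"
    using mu_horizon K by simp
  have "slope r0 = 2 * r0 / ell\<^sup>2 + 2 * mu / r0\<^sup>2"
    unfolding slope_def by (simp add: power2_eq_square)
  also have "\<dots> = (3 * r0\<^sup>2 - ell\<^sup>2) / (ell\<^sup>2 * r0)"
    unfolding mu using r0_pos ell_pos by (simp add: field_simps power2_eq_square power3_eq_cube)
  finally have "slope r0 = (3 * r0\<^sup>2 - ell\<^sup>2) / (ell\<^sup>2 * r0)" .
  with \<open>ell\<^sup>2 < 3 * r0\<^sup>2\<close> show ?thesis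
    using r0_pos ell_pos by simp
qed

lemma slope_lower_bound: "\<exists>c>0. \<forall>s\<ge>r0. c \<le> slope s"
proof (cases "mu \<ge> 0")
  case True
  have "2 * r0 / ell\<^sup>2 \<le> slope s" if "s \<ge> r0" for s
  proof -
    have "2 * r0 / ell\<^sup>2 \<le> (s + r0) / ell\<^sup>2"
      using that by (simp add: divide_right_mono)
    moreover have "0 \<le> 2 * mu / (s * r0)"
      using True that r0_pos by simp
    ultimately show ?thesis
      unfolding slope_def by simp
  qed
  moreover have "2 * r0 / ell\<^sup>2 > 0"
    using r0_pos ell_pos by simp
  ultimately show ?thesis
    by blast
next
  case False
  have "slope r0 \<le> slope s" if "s \<ge> r0" for s
  proof -
    have "slope s - slope r0 = (s - r0) * (1 / ell\<^sup>2 - 2 * mu / (s * r0\<^sup>2))"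
      unfolding slope_def using that r0_pos ell_pos by (simp add: field_simps power2_eq_square)
    moreover have "2 * mu / (s * r0\<^sup>2) \<le> 0"
      using False that r0_pos by (simp add: divide_nonpos_pos)
    then have "1 / ell\<^sup>2 - 2 * mu / (s * r0\<^sup>2) \<ge> 0"
      using ell_pos by (smt (verit) divide_pos_pos zero_less_power)
    ultimately have "slope s - slope r0 \<ge> 0"
      using that by (metis diff_ge_0_iff_ge mult_nonneg_nonneg)
    then show ?thesis
      by simp
  qed
  then show ?thesis
    using slope_horizon_pos by blast
qed

lemma f_lower_linear: "\<exists>c>0. \<forall>s\<ge>r0. c * (s - r0) \<le> f s"
proof -
  obtain c where "c > 0" and c: "\<forall>s\<ge>r0. c \<le> slope s"
    using slope_lower_bound by blast
  have "c * (s - r0) \<le> f s" if "s \<ge> r0" for s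
    using f_eq_slope[of s] c mult_right_mono[of c "slope s" "s - r0"] that r0_pos
    by (simp add: mult.commute)
  with \<open>c > 0\<close> show ?thesis
    by blast
qed

lemma f_upper_linear: "\<exists>M>0. \<forall>s. r0 \<le> s \<longrightarrow> s \<le> R \<longrightarrow> f s \<le> M * (s - r0)"
proof (cases "R \<ge> r0")
  case True
  obtain x where x: "x \<in> {r0..R}" and max: "\<forall>s\<in>{r0..R}. slope s \<le> slope x"
    using continuous_attains_sup[of "{r0..R}" slope] continuous_on_subset[OF slope_continuous_on] True
    by auto
  have "f s \<le> slope x * (s - r0)" if "r0 \<le> s" "s \<le> R" for s
    using f_eq_slope[of s] max mult_right_mono[of "slope s" "slope x" "s - r0"] that r0_pos
    by (simp add: mult.commute)
  moreover have "slope x > 0"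
    using max slope_horizon_pos True by force
  ultimately show ?thesis
    by blast
qed (auto intro: exI[of _ 1])

lemma f_upper_quadratic: "\<exists>C>0. \<forall>s\<ge>max 1 r0. f s \<le> C * s\<^sup>2"
proof -
  define C where "C = 1 / ell\<^sup>2 + 1 + 2 * \<bar>mu\<bar> / r0"
  have "f s \<le> C * s\<^sup>2" if s: "s \<ge> max 1 r0" for s
  proof -
    have "1 \<le> s\<^sup>2"
      using s by (simp add: one_le_power)
    have "- 2 * mu / s \<le> 2 * \<bar>mu\<bar> / r0"
      using s r0_pos by (smt (verit) frac_le abs_ge_zero divide_minus_left max.bounded_iff)
    then have "f s \<le> s\<^sup>2 / ell\<^sup>2 + 1 + 2 * \<bar>mu\<bar> / r0"
      unfolding fBH_def using K_range by auto
    also have "\<dots> \<le> s\<^sup>2 / ell\<^sup>2 + s\<^sup>2 + 2 * \<bar>mu\<bar> / r0 * s\<^sup>2"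
      using \<open>1 \<le> s\<^sup>2\<close> r0_pos mult_left_mono[of 1 "s\<^sup>2" "2 * \<bar>mu\<bar> / r0"] by simp
    finally show ?thesis
      unfolding C_def by (simp add: algebra_simps)
  qed
  moreover have "C > 0"
    unfolding C_def using r0_pos ell_pos by (intro add_pos_nonneg) auto
  ultimately show ?thesis
    by blast
qed

lemma f_nonneg: "s \<ge> r0 \<Longrightarrow> f s \<ge> 0"
  using f_pos[of s] r0_zero by (cases "s = r0") auto

definition rho_density :: "real \<Rightarrow> real" where
  "rho_density s = 1 / sqrt (f s)"

lemma rho_density_nonneg: "s \<ge> r0 \<Longrightarrow> rho_density s \<ge> 0"
  unfolding rho_density_def using f_nonneg by simp

lemma rho_density_borel: "rho_density \<in> borel_measurable lborel"
  unfolding rho_density_def fBH_def by measurable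

text \<open>Near the horizon \<open>f\<close> vanishes linearly, so the density has an integrable
  inverse-square-root singularity.\<close>

lemma rho_density_integrable: "R \<ge> r0 \<Longrightarrow> rho_density integrable_on {r0..R}"
proof -
  assume R: "R \<ge> r0"
  obtain c where c: "c > 0" "\<forall>s\<ge>r0. c * (s - r0) \<le> f s"
    using f_lower_linear by blast
  have bound: "rho_density s \<le> 1 / sqrt (c * (s - r0))" if "s \<ge> r0" for s
  proof (cases "s = r0")
    case False
    then have "c * (s - r0) > 0"
      using that c(1) by simp
    then show ?thesis
      unfolding rho_density_def using c(2) that by (simp add: frac_le)
  qed (simp add: rho_density_def r0_zero)
  show ?thesis
  proof (rule measurable_bounded_by_integrable_imp_integrable_real)
    show "rho_density \<in> borel_measurable (lebesgue_on {r0..R})"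
      using measurable_completion[OF rho_density_borel] by (rule measurable_restrict_space1)
    show "(\<lambda>s. 1 / sqrt (c * (s - r0))) integrable_on {r0..R}"
      using inverse_sqrt_has_integral[OF c(1) R] by blast
    show "\<bar>rho_density s\<bar> \<le> 1 / sqrt (c * (s - r0))" if "s \<in> {r0..R}" for s
      using bound rho_density_nonneg that by simp
  qed simp
qed

lemma rho_coord_eq_integral: "r \<ge> r0 \<Longrightarrow> rho_coord ell K mu r0 r = integral {r0..r} rho_density"
proof -
  assume r: "r \<ge> r0"
  have "rho_density absolutely_integrable_on {r0..r}"
    using rho_density_integrable[OF r] rho_density_nonneg
    by (intro nonnegative_absolutely_integrable_1) auto
  then have "integrable lebesgue (\<lambda>x. indicator {r0..r} x *\<^sub>R rho_density x)"
    by (simp add: set_integrable_def)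
  moreover have "(\<lambda>x. indicator {r0..r} x *\<^sub>R rho_density x) \<in> borel_measurable lborel"
    using rho_density_borel by measurable
  ultimately have "set_integrable lborel {r0..r} rho_density"
    unfolding set_integrable_def using integrable_completion by blast
  then have "(LBINT s:{r0..r}. rho_density s) = integral {r0..r} rho_density"
    by (rule set_borel_integral_eq_integral(2))
  moreover have "rho_coord ell K mu r0 r = (LBINT s:{r0..r}. rho_density s)"
    unfolding rho_coord_def rho_density_def[abs_def] using r by (rule interval_integral_Icc)
  ultimately show ?thesis
    by simp
qed

lemma rho_coord_continuous_on: "continuous_on {r0..R} (rho_coord ell K mu r0)"
proof (cases "R \<ge> r0")
  case True
  show ?thesis
    using indefinite_integral_continuous_1[OF rho_density_integrable[OF True]]
    by (rule continuous_on_eq) (simp add: rho_coord_eq_integral)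
qed simp

text \<open>Far out \<open>f\<close> grows at most quadratically, so the proper distance grows at least
  logarithmically.\<close>

lemma rho_coord_unbounded: "\<exists>r\<ge>r0. \<rho> \<le> rho_coord ell K mu r0 r"
proof -
  obtain C where C: "C > 0" "\<forall>s\<ge>max 1 r0. f s \<le> C * s\<^sup>2"
    using f_upper_quadratic by blast
  define a where "a = max 1 r0 + 1"
  define r where "r = a * exp (max 0 \<rho> * sqrt C)"
  have a: "a \<ge> 1" "a > r0"
    unfolding a_def by auto
  have r: "r \<ge> a"
    unfolding r_def using a C(1) by simp
  have lower: "1 / (sqrt C * s) \<le> rho_density s" if "s \<in> {a..r}" for s
  proof -
    have "s > r0" "s \<ge> 1"
      using that a by auto
    then have "0 < f s" "f s \<le> C * s\<^sup>2"
      using f_pos C that unfolding a_def by auto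
    then have "sqrt (f s) \<le> sqrt (C * s\<^sup>2)"
      by simp
    also have "\<dots> = sqrt C * s"
      using \<open>s \<ge> 1\<close> by (simp add: real_sqrt_mult)
    finally have "sqrt (f s) \<le> sqrt C * s" .
    then show ?thesis
      unfolding rho_density_def using \<open>0 < f s\<close> by (simp add: frac_le)
  qed
  have "((\<lambda>s. ln s / sqrt C) has_real_derivative 1 / (sqrt C * x)) (at x)" if "x > 0" for x
    using that C by (auto intro!: derivative_eq_intros simp: field_simps)
  then have "((\<lambda>s. 1 / (sqrt C * s)) has_integral ln r / sqrt C - ln a / sqrt C) {a..r}"
    using r a by (intro fundamental_theorem_of_calculus)
      (auto simp: has_real_derivative_iff_has_vector_derivative[symmetric] intro: has_field_derivative_at_within)
  moreover have "ln r / sqrt C - ln a / sqrt C = max 0 \<rho>"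
    unfolding r_def using a C by (simp add: ln_mult diff_divide_distrib[symmetric])
  moreover have "rho_density integrable_on {a..r}"
    using a r by (intro integrable_on_subinterval[OF rho_density_integrable[of r]]) auto
  ultimately have "max 0 \<rho> \<le> integral {a..r} rho_density"
    using lower by (intro has_integral_le[OF _ integrable_integral]) auto
  also have "\<dots> \<le> integral {r0..r} rho_density"
    using rho_density_integrable[of r] rho_density_nonneg r a
    by (intro integral_subset_le integrable_on_subinterval[OF rho_density_integrable[of r]]) auto
  finally show ?thesis
    using rho_coord_eq_integral[of r] r a by (intro exI[of _ r]) auto
qed

lemma rho_coord_surj: "\<rho> > 0 \<Longrightarrow> \<exists>r>r0. rho_coord ell K mu r0 r = \<rho>"
proof -
  assume \<rho>: "\<rho> > 0"
  obtain r1 where r1: "r1 \<ge> r0" "\<rho> \<le> rho_coord ell K mu r0 r1"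
    using rho_coord_unbounded by blast
  have "rho_coord ell K mu r0 r0 = 0"
    using rho_coord_eq_integral[of r0] by simp
  moreover obtain r where "r0 \<le> r" "r \<le> r1" "rho_coord ell K mu r0 r = \<rho>"
    using IVT'[of "rho_coord ell K mu r0" r0 \<rho> r1] rho_coord_continuous_on[of r1] r1 \<rho>
      \<open>rho_coord ell K mu r0 r0 = 0\<close> by auto
  ultimately have "r \<noteq> r0"
    using \<rho> \<open>rho_coord ell K mu r0 r = \<rho>\<close> by auto
  with \<open>r0 \<le> r\<close> have "r > r0"
    by simp
  with \<open>rho_coord ell K mu r0 r = \<rho>\<close> show ?thesis
    by blast
qed

lemma T_pos: "T > 0"
  unfolding tperiod_def deriv_f_horizon using slope_horizon_pos by simp

lemma polar_chart_periodic: "polar_chart ell K mu r0 (r, t + T) = polar_chart ell K mu r0 (r, t)"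
proof -
  have "2 * pi * (t + T) / T = 2 * pi * t / T + 2 * pi"
    using T_pos by (simp add: field_simps)
  then show ?thesis
    unfolding polar_chart_def Let_def by (simp add: cos_periodic sin_periodic)
qed

lemma norm_polar_chart: "norm (polar_chart ell K mu r0 (r, t)) = \<bar>rho_coord ell K mu r0 r\<bar>"
proof -
  have "(\<rho> * cos \<theta>)\<^sup>2 + (\<rho> * sin \<theta>)\<^sup>2 = \<rho>\<^sup>2" for \<rho> \<theta> :: real
    by (simp add: power_mult_distrib flip: distrib_left)
  then show ?thesis
    unfolding polar_chart_def Let_def norm_Pair by simp
qed

lemma polar_chart_surj:
  assumes "x \<noteq> 0"
  shows "\<exists>r t. r > r0 \<and> 0 \<le> t \<and> t \<le> T \<and> polar_chart ell K mu r0 (r, t) = x"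
proof -
  obtain x1 x2 where x: "x = (x1, x2)"
    by (cases x)
  define \<rho> where "\<rho> = sqrt (x1\<^sup>2 + x2\<^sup>2)"
  have "x1\<^sup>2 + x2\<^sup>2 > 0"
    using assms unfolding x zero_prod_def by (auto simp: sum_power2_gt_zero_iff)
  then have \<rho>: "\<rho> > 0" "\<rho>\<^sup>2 = x1\<^sup>2 + x2\<^sup>2"
    unfolding \<rho>_def by simp_all
  have "(x1 / \<rho>)\<^sup>2 + (x2 / \<rho>)\<^sup>2 = (x1\<^sup>2 + x2\<^sup>2) / \<rho>\<^sup>2"
    by (simp add: power_divide add_divide_distrib)
  with \<rho>(2) \<open>x1\<^sup>2 + x2\<^sup>2 > 0\<close> have "(x1 / \<rho>)\<^sup>2 + (x2 / \<rho>)\<^sup>2 = 1"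
    by (metis divide_self less_irrefl)
  then obtain \<theta> where \<theta>: "0 \<le> \<theta>" "\<theta> < 2 * pi" "x1 / \<rho> = cos \<theta>" "x2 / \<rho> = sin \<theta>"
    using sincos_total_2pi by blast
  obtain r where r: "r > r0" "rho_coord ell K mu r0 r = \<rho>"
    using rho_coord_surj[OF \<rho>(1)] by blast
  define t where "t = \<theta> * T / (2 * pi)"
  have "2 * pi * t / T = \<theta>"
    unfolding t_def using T_pos by simp
  then have "polar_chart ell K mu r0 (r, t) = x"
    unfolding polar_chart_def Let_def x using r \<theta> \<rho>(1) by (simp add: field_simps)
  moreover have "0 \<le> t" "t \<le> T"
    unfolding t_def using \<theta> T_pos by (auto simp: field_simps)
  ultimately show ?thesis
    using r by blast
qed

lemma polar_chart_bounded:
  fixes u :: "real \<times> real \<Rightarrow> real"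
  assumes u: "continuous_on UNIV u"
  shows "\<exists>B. \<forall>r t. r0 \<le> r \<longrightarrow> r \<le> R \<longrightarrow> \<bar>u (polar_chart ell K mu r0 (r, t))\<bar> \<le> B"
proof -
  obtain \<rho> where \<rho>: "\<forall>r\<in>{r0..R}. norm (rho_coord ell K mu r0 r) \<le> \<rho>"
    using compact_imp_bounded[OF compact_continuous_image[OF rho_coord_continuous_on compact_Icc]]
    by (auto simp: bounded_iff)
  obtain B where B: "\<forall>y\<in>cball 0 \<rho>. norm (u y) \<le> B"
    using compact_imp_bounded[OF compact_continuous_image[OF continuous_on_subset[OF u] compact_cball[of 0 \<rho>]]]
    by (auto simp: bounded_iff)
  have "\<bar>u (polar_chart ell K mu r0 (r, t))\<bar> \<le> B" if "r0 \<le> r" "r \<le> R" for r t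
  proof -
    have "polar_chart ell K mu r0 (r, t) \<in> cball 0 \<rho>"
      using \<rho> that norm_polar_chart[of r t] by auto
    with B show ?thesis
      by auto
  qed
  then show ?thesis
    by blast
qed

section \<open>The potential in Riccati form\<close>

definition m :: real where
  "m = k\<^sup>2 - 2 * K"

definition A :: "real \<Rightarrow> real" where
  "A r = 6 * mu + m * r"

definition psi :: "real \<Rightarrow> real" where
  "psi r = 6 * mu / (r * A r)"

definition psi' :: "real \<Rightarrow> real" where
  "psi' r = - 6 * mu * (A r + m * r) / (r * A r)\<^sup>2"

definition Q :: "real \<Rightarrow> real" where
  "Q r = k\<^sup>2 * m / (r * A r)"

definition weight :: "real \<Rightarrow> real" where
  "weight r = m + 6 * mu / r"

lemma m_pos: "m > 0"
  using k_big K_range unfolding m_def by auto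

lemma A_pos: "r \<ge> r0 \<Longrightarrow> A r > 0"
proof -
  assume r: "r \<ge> r0"
  have "A r0 > 0"
  proof (cases "mu \<ge> 0")
    case True
    then show ?thesis
      unfolding A_def using m_pos r0_pos by (simp add: add_nonneg_pos)
  next
    case False
    then have K: "K = -1"
      using mu_nonpos_imp_K by simp
    have mu: "2 * mu = r0 ^ 3 / ell\<^sup>2 - r0"
      using mu_horizon K by simp
    have "0 < slope r0"
      by (rule slope_horizon_pos)
    then have "0 < 2 * r0 ^ 3 / ell\<^sup>2 + 2 * mu"
      unfolding slope_def using r0_pos by (simp add: field_simps power2_eq_square power3_eq_cube)
    moreover have "A r0 = 3 * r0 ^ 3 / ell\<^sup>2 - r0 + k\<^sup>2 * r0"
      using mu K unfolding A_def m_def by (simp add: algebra_simps)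
    moreover have "k\<^sup>2 * r0 > 0"
      using k_pos r0_pos by simp
    ultimately show ?thesis
      using mu by linarith
  qed
  moreover have "m * r0 \<le> m * r"
    using r m_pos by simp
  ultimately show ?thesis
    unfolding A_def by simp
qed

lemma psi_has_real_derivative:
  assumes "r \<ge> r0"
  shows "(psi has_real_derivative psi' r) (at r)"
proof -
  have "r * A r \<noteq> 0"
    using A_pos[OF assms] r0_pos assms by simp
  then show ?thesis
    unfolding psi_def[abs_def] psi'_def A_def
    by (auto intro!: derivative_eq_intros simp: power2_eq_square field_simps)
qed

lemma VSk_riccati:
  assumes "r \<ge> r0"
  shows "VSk ell K mu k r = deriv f r * psi r + f r * psi' r + f r * (psi r)\<^sup>2 + Q r"
proof -
  have "6 * mu + (k\<^sup>2 - 2 * K) * r \<noteq> 0" "r > 0"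
    using A_pos[OF assms] r0_pos assms unfolding A_def m_def by auto
  then show ?thesis
    unfolding deriv_f[OF \<open>r > 0\<close>] VSk_def fBH_def Let_def psi_def psi'_def Q_def A_def m_def
    using ell_pos by (simp add: divide_simps) algebra
qed

lemma Q_nonneg: "r \<ge> r0 \<Longrightarrow> Q r \<ge> 0"
  unfolding Q_def using m_pos A_pos[of r] r0_pos by simp

lemma weight_eq: "r > 0 \<Longrightarrow> weight r = A r / r"
  unfolding weight_def A_def by (simp add: field_simps)

lemma weight_pos: "r \<ge> r0 \<Longrightarrow> weight r > 0"
  using weight_eq[of r] A_pos[of r] r0_pos by simp

lemma weight_upper: "r \<ge> r0 \<Longrightarrow> weight r \<le> m + 6 * \<bar>mu\<bar> / r0"
  unfolding weight_def using r0_pos by (simp add: frac_le)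

lemma weight_lower: "r0 \<le> r \<Longrightarrow> r \<le> R \<Longrightarrow> A r0 / R \<le> weight r"
proof -
  assume r: "r0 \<le> r" "r \<le> R"
  have "A r0 \<le> A r"
    unfolding A_def using r m_pos by simp
  then show ?thesis
    using weight_eq[of r] r A_pos[of r0] r0_pos by (simp add: frac_le)
qed

lemma weight_sq_has_real_derivative:
  assumes "r \<ge> r0"
  shows "((\<lambda>r. (weight r)\<^sup>2) has_real_derivative - 2 * psi r * (weight r)\<^sup>2) (at r)"
proof -
  have r: "r > 0" "A r \<noteq> 0"
    using A_pos[OF assms] r0_pos assms by auto
  have "(weight has_real_derivative - 6 * mu / r\<^sup>2) (at r)"
    unfolding weight_def[abs_def] using r by (auto intro!: derivative_eq_intros simp: power2_eq_square)
  from DERIV_mult[OF this this]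
  have "((\<lambda>r. (weight r)\<^sup>2) has_real_derivative 2 * weight r * (- 6 * mu / r\<^sup>2)) (at r)"
    by (simp add: power2_eq_square algebra_simps)
  moreover have "psi r * weight r = 6 * mu / r\<^sup>2"
    unfolding psi_def weight_eq[OF r(1)] using r by (simp add: field_simps power2_eq_square)
  ultimately show ?thesis
    by (simp add: power2_eq_square algebra_simps)
qed

end

section \<open>Radial energy of a solution\<close>

locale bh_solution = bh_background +
  fixes U Ur Ut Urr Urt Utr Utt :: "real \<times> real \<Rightarrow> real"
  assumes U_periodic: "\<And>r t. U (r, t + T) = U (r, t)"
    and U_C2: "C2_partials_on ({r0<..} \<times> UNIV) U Ur Ut Urr Urt Utr Utt"
    and U_eq: "\<forall>r t. r > r0 \<longrightarrow>
        - (deriv f r * Ur (r, t) + f r * Urr (r, t) + Utt (r, t) / f r) + VSk ell K mu k r * U (r, t) = 0"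
    and U_L2: "set_integrable lborel ({r0<..} \<times> {0..T}) (\<lambda>p. (U p)\<^sup>2)"
    and U_bounded: "\<exists>B. \<forall>r t. r0 < r \<longrightarrow> r \<le> r0 + 1 \<longrightarrow> \<bar>U (r, t)\<bar> \<le> B"
begin

lemma
  shows U_deriv_r: "r > r0 \<Longrightarrow> ((\<lambda>s. U (s, t)) has_real_derivative Ur (r, t)) (at r)"
    and Ur_deriv_r: "r > r0 \<Longrightarrow> ((\<lambda>s. Ur (s, t)) has_real_derivative Urr (r, t)) (at r)"
    and U_deriv_t: "r > r0 \<Longrightarrow> ((\<lambda>s. U (r, s)) has_real_derivative Ut (r, t)) (at t)"
    and Ut_deriv_t: "r > r0 \<Longrightarrow> ((\<lambda>s. Ut (r, s)) has_real_derivative Utt (r, t)) (at t)"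
    and U_cont: "continuous_on ({r0<..} \<times> UNIV) U"
    and Ur_cont: "continuous_on ({r0<..} \<times> UNIV) Ur"
    and Ut_cont: "continuous_on ({r0<..} \<times> UNIV) Ut"
    and Urr_cont: "continuous_on ({r0<..} \<times> UNIV) Urr"
  using U_C2 unfolding C2_partials_on_def by auto

definition E :: "real \<Rightarrow> real" where
  "E r = integral {0..T} (\<lambda>t. (U (r, t))\<^sup>2)"

definition D :: "real \<Rightarrow> real" where
  "D r = integral {0..T} (\<lambda>t. U (r, t) * Ur (r, t))"

definition D' :: "real \<Rightarrow> real" where
  "D' r = integral {0..T} (\<lambda>t. (Ur (r, t))\<^sup>2 + U (r, t) * Urr (r, t))"

definition G :: "real \<Rightarrow> real" where
  "G r = f r * (D r - psi r * E r)"

definition G' :: "real \<Rightarrow> real" where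
  "G' r = deriv f r * (D r - psi r * E r) + f r * (D' r - psi' r * E r - 2 * psi r * D r)"

definition W :: "real \<Rightarrow> real" where
  "W r = (weight r)\<^sup>2 * E r"

lemma slice_has_integral:
  fixes g :: "real \<times> real \<Rightarrow> real"
  assumes "continuous_on ({r0<..} \<times> UNIV) g" "r > r0"
  shows "((\<lambda>t. g (r, t)) has_integral integral {0..T} (\<lambda>t. g (r, t))) {0..T}"
  using slice_continuous_on[OF assms] by (intro integrable_integral integrable_continuous_interval)

lemma E_nonneg: "r > r0 \<Longrightarrow> E r \<ge> 0"
  unfolding E_def using slice_has_integral[OF continuous_on_power[OF U_cont]]
  by (intro integral_nonneg) auto

lemma E_has_real_derivative: "r > r0 \<Longrightarrow> (E has_real_derivative 2 * D r) (at r)"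
proof -
  assume r: "r > r0"
  have "((\<lambda>s. (U (s, t))\<^sup>2) has_real_derivative 2 * (U (x, t) * Ur (x, t))) (at x)" if "x > r0" for x t
    using DERIV_mult[OF U_deriv_r[of x t] U_deriv_r[of x t]] that by (simp add: power2_eq_square algebra_simps)
  then have "(E has_real_derivative integral {0..T} (\<lambda>t. 2 * (U (r, t) * Ur (r, t)))) (at r)"
    unfolding E_def[abs_def] using r U_cont Ur_cont
    by (intro has_real_derivative_integral_parametric[where g' = "\<lambda>p. 2 * (U p * Ur p)"])
      (auto intro: continuous_intros)
  then show ?thesis
    unfolding D_def by simp
qed

lemma D_has_real_derivative: "r > r0 \<Longrightarrow> (D has_real_derivative D' r) (at r)"
proof -
  assume r: "r > r0"
  have "((\<lambda>s. U (s, t) * Ur (s, t)) has_real_derivative (Ur (x, t))\<^sup>2 + U (x, t) * Urr (x, t)) (at x)"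
    if "x > r0" for x t
    using DERIV_mult[OF U_deriv_r[of x t] Ur_deriv_r[of x t]] that by (simp add: power2_eq_square algebra_simps)
  then show ?thesis
    unfolding D_def[abs_def] D'_def using r U_cont Ur_cont Urr_cont
    by (intro has_real_derivative_integral_parametric[where g' = "\<lambda>p. (Ur p)\<^sup>2 + U p * Urr p"])
      (auto intro: continuous_intros)
qed

lemma U_Utt_has_integral:
  "r > r0 \<Longrightarrow> ((\<lambda>t. U (r, t) * Utt (r, t)) has_integral - integral {0..T} (\<lambda>t. (Ut (r, t))\<^sup>2)) {0..T}"
  using T_pos U_deriv_t Ut_deriv_t U_periodic
  by (intro periodic_has_integral_mult_second_deriv[where v = "\<lambda>t. U (r, t)"]) auto

lemma G_has_real_derivative: "r > r0 \<Longrightarrow> (G has_real_derivative G' r) (at r)"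
proof -
  assume r: "r > r0"
  have "((\<lambda>r. D r - psi r * E r) has_real_derivative D' r - (psi' r * E r + 2 * D r * psi r)) (at r)"
    using r by (intro DERIV_diff DERIV_mult D_has_real_derivative psi_has_real_derivative
        E_has_real_derivative) auto
  from DERIV_mult[OF f_has_real_derivative this] r r0_pos show ?thesis
    unfolding G_def[abs_def] G'_def by (simp add: algebra_simps)
qed

definition G'_density :: "real \<Rightarrow> real \<Rightarrow> real" where
  "G'_density r t = deriv f r * (U (r, t) * Ur (r, t) - psi r * (U (r, t))\<^sup>2)
    + f r * ((Ur (r, t))\<^sup>2 + U (r, t) * Urr (r, t) - psi' r * (U (r, t))\<^sup>2 - 2 * psi r * U (r, t) * Ur (r, t))"

lemma G'_density_has_integral: "r > r0 \<Longrightarrow> (G'_density r has_integral G' r) {0..T}"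
proof -
  assume r: "r > r0"
  have "((\<lambda>t. deriv f r * (U (r, t) * Ur (r, t)) - deriv f r * psi r * (U (r, t))\<^sup>2
      + f r * ((Ur (r, t))\<^sup>2 + U (r, t) * Urr (r, t)) - f r * psi' r * (U (r, t))\<^sup>2
      - 2 * f r * psi r * (U (r, t) * Ur (r, t))) has_integral
      deriv f r * D r - deriv f r * psi r * E r + f r * D' r - f r * psi' r * E r
      - 2 * f r * psi r * D r) {0..T}"
    unfolding E_def D_def D'_def using r U_cont Ur_cont Urr_cont
    by (intro has_integral_diff has_integral_add has_integral_mult_right slice_has_integral)
      (auto intro: continuous_intros)
  then show ?thesis
    unfolding G'_density_def[abs_def] G'_def by (simp add: algebra_simps)
qed

lemma G'_density_eq:
  "r > r0 \<Longrightarrow> G'_density r t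
    = f r * (Ur (r, t) - psi r * U (r, t))\<^sup>2 + Q r * (U (r, t))\<^sup>2 - U (r, t) * Utt (r, t) / f r"
  unfolding G'_density_def using VSk_riccati U_eq by (intro riccati_identity) auto

text \<open>By periodicity the angular term integrates to \<open>\<integral> Ut\<^sup>2 / f \<ge> 0\<close>.\<close>

lemma G'_nonneg: "r > r0 \<Longrightarrow> G' r \<ge> 0"
proof -
  assume r: "r > r0"
  define I where "I = integral {0..T} (\<lambda>t. (Ut (r, t))\<^sup>2)"
  have angular: "((\<lambda>t. - U (r, t) * Utt (r, t) / f r) has_integral I / f r) {0..T}"
    using has_integral_divide[OF has_integral_neg[OF U_Utt_has_integral[OF r]], of "f r"]
    unfolding I_def by simp
  have "- U (r, t) * Utt (r, t) / f r \<le> G'_density r t" for t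
    unfolding G'_density_eq[OF r] using f_pos[OF r] Q_nonneg[of r] r by simp
  then have "I / f r \<le> G' r"
    by (intro has_integral_le[OF angular G'_density_has_integral[OF r]])
  moreover have "I \<ge> 0"
    unfolding I_def using r Ut_cont by (intro integral_nonneg integrable_continuous_interval slice_continuous_on)
      (auto intro: continuous_intros)
  ultimately show ?thesis
    using f_pos[OF r] by (smt (verit) divide_nonneg_pos)
qed

lemma G_mono: "r0 < r \<Longrightarrow> r \<le> s \<Longrightarrow> G r \<le> G s"
proof -
  assume "r0 < r" "r \<le> s"
  then show ?thesis
    using G_has_real_derivative G'_nonneg
    by (intro DERIV_nonneg_imp_nondecreasing[of r s G]) (meson order.strict_trans2)+
qed

lemma W_has_real_derivative:
  "r > r0 \<Longrightarrow> (W has_real_derivative 2 * (weight r)\<^sup>2 / f r * G r) (at r)"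
proof -
  assume r: "r > r0"
  from DERIV_mult[OF weight_sq_has_real_derivative E_has_real_derivative[OF r]] r
  have "(W has_real_derivative - 2 * psi r * (weight r)\<^sup>2 * E r + (weight r)\<^sup>2 * (2 * D r)) (at r)"
    unfolding W_def[abs_def] by (simp add: algebra_simps)
  moreover have "- 2 * psi r * (weight r)\<^sup>2 * E r + (weight r)\<^sup>2 * (2 * D r) = 2 * (weight r)\<^sup>2 / f r * G r"
    unfolding G_def using f_pos[OF r] by (simp add: field_simps)
  ultimately show ?thesis
    by simp
qed

lemma W_nonneg: "r > r0 \<Longrightarrow> W r \<ge> 0"
  unfolding W_def using E_nonneg by simp

lemma W_le_E: "r > r0 \<Longrightarrow> W r \<le> (m + 6 * \<bar>mu\<bar> / r0)\<^sup>2 * E r"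
  unfolding W_def using weight_upper[of r] weight_pos[of r] E_nonneg[of r]
  by (intro mult_right_mono power_mono) auto

lemma W_small_somewhere: "e > 0 \<Longrightarrow> r > r0 \<Longrightarrow> \<exists>s\<ge>r. W s < e"
proof -
  assume e: "e > 0" and r: "r > r0"
  define C where "C = (m + 6 * \<bar>mu\<bar> / r0)\<^sup>2"
  have "C > 0"
    unfolding C_def using weight_pos[of r0] weight_upper[of r0] by simp
  have "(\<lambda>p. (U p)\<^sup>2) integrable_on ({r0<..} \<times> {0..T})"
    by (rule set_borel_integral_eq_integral(1)[OF U_L2])
  then obtain s where s: "s \<ge> r" "E s < e / C"
    unfolding E_def using slice_integral_small_somewhere[of "\<lambda>p. (U p)\<^sup>2" r0 0 T "e / C" r]
      U_cont e \<open>C > 0\<close> r by (auto intro: continuous_intros)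
  have "W s \<le> C * E s"
    unfolding C_def using W_le_E s r by simp
  also have "\<dots> < e"
    using s \<open>C > 0\<close> by (simp add: field_simps)
  finally show ?thesis
    using s by blast
qed

lemma W_bounded_near_horizon: "\<exists>B. \<forall>r. r0 < r \<longrightarrow> r \<le> r0 + 1 \<longrightarrow> W r \<le> B"
proof -
  obtain B where B: "\<forall>r t. r0 < r \<longrightarrow> r \<le> r0 + 1 \<longrightarrow> \<bar>U (r, t)\<bar> \<le> B"
    using U_bounded by blast
  have "W r \<le> (m + 6 * \<bar>mu\<bar> / r0)\<^sup>2 * (T * B\<^sup>2)" if "r0 < r" "r \<le> r0 + 1" for r
  proof -
    have "(U (r, t))\<^sup>2 \<le> B\<^sup>2" for t
      using B that by (metis abs_ge_zero power2_abs power_mono)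
    then have "E r \<le> integral {0..T} (\<lambda>t. B\<^sup>2)"
      unfolding E_def using that U_cont
      by (intro integral_le integrable_continuous_interval slice_continuous_on) (auto intro: continuous_intros)
    then have "E r \<le> T * B\<^sup>2"
      using T_pos by simp
    then show ?thesis
      using W_le_E[of r] that by (smt (verit) mult_left_mono zero_le_power2)
  qed
  then show ?thesis
    by blast
qed

text \<open>Since \<open>f\<close> vanishes linearly at the horizon, the factor \<open>2 weight\<^sup>2 / f\<close> has a
  non-integrable singularity there.\<close>

lemma W_factor_singular:
  "\<exists>\<gamma>>0. \<forall>r. r0 < r \<longrightarrow> r \<le> r0 + 1 \<longrightarrow> \<gamma> / (r - r0) \<le> 2 * (weight r)\<^sup>2 / f r"
proof -
  obtain M where M: "M > 0" "\<forall>s. r0 \<le> s \<longrightarrow> s \<le> r0 + 1 \<longrightarrow> f s \<le> M * (s - r0)"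
    using f_upper_linear by blast
  define a where "a = A r0 / (r0 + 1)"
  have a: "a > 0"
    unfolding a_def using A_pos[of r0] r0_pos by simp
  have "2 * a\<^sup>2 / M / (r - r0) \<le> 2 * (weight r)\<^sup>2 / f r" if r: "r0 < r" "r \<le> r0 + 1" for r
  proof -
    have "a \<le> weight r"
      unfolding a_def using weight_lower r by simp
    then have "2 * a\<^sup>2 \<le> 2 * (weight r)\<^sup>2"
      using a by (simp add: power_mono)
    moreover have "0 < f r" "f r \<le> M * (r - r0)"
      using f_pos M r by auto
    ultimately show ?thesis
      using a M r by (simp add: frac_le divide_divide_eq_left)
  qed
  moreover have "2 * a\<^sup>2 / M > 0"
    using a M by simp
  ultimately show ?thesis
    by blast
qed

lemma E_zero: "r > r0 \<Longrightarrow> E r = 0"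
proof -
  assume r: "r > r0"
  obtain \<gamma> where \<gamma>: "\<gamma> > 0" "\<forall>r. r0 < r \<longrightarrow> r \<le> r0 + 1 \<longrightarrow> \<gamma> / (r - r0) \<le> 2 * (weight r)\<^sup>2 / f r"
    using W_factor_singular by blast
  obtain B where B: "\<forall>r. r0 < r \<longrightarrow> r \<le> r0 + 1 \<longrightarrow> W r \<le> B"
    using W_bounded_near_horizon by blast
  have "2 * (weight s)\<^sup>2 / f s > 0" if "s > r0" for s
    using weight_pos[of s] f_pos[of s] that by simp
  then have "W r = 0"
    using W_has_real_derivative G_mono W_nonneg W_small_somewhere \<gamma> B r
    by (intro eq_zero_if_deriv_mono_factor[of r0 W "\<lambda>r. 2 * (weight r)\<^sup>2 / f r" G "r0 + 1" \<gamma> B]) auto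
  then show ?thesis
    unfolding W_def using weight_pos[of r] r by simp
qed

lemma U_zero: "r > r0 \<Longrightarrow> 0 \<le> t \<Longrightarrow> t \<le> T \<Longrightarrow> U (r, t) = 0"
proof -
  assume r: "r > r0" and t: "0 \<le> t" "t \<le> T"
  have "continuous_on {0..T} (\<lambda>t. (U (r, t))\<^sup>2)"
    using r U_cont by (intro continuous_intros slice_continuous_on)
  then have "(U (r, t))\<^sup>2 = 0"
    using E_zero[OF r] slice_has_integral[OF continuous_on_power[OF U_cont] r, of 2] T_pos t
    by (intro has_integral_0_cbox_imp_0[of 0 T "\<lambda>t. (U (r, t))\<^sup>2"]) (auto simp: E_def)
  then show ?thesis
    by simp
qed

end

theorem mainTheorem7:
  fixes ell mu K k r0 :: real
    and u :: "real \<times> real \<Rightarrow> real"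
    and U Ur Ut Urr Urt Utr Utt :: "real \<times> real \<Rightarrow> real"
  assumes ell_pos: "ell > 0"
    and K_range: "K \<in> {-1, 0, 1}"
    and mu_cond: "(K \<in> {0, 1} \<longrightarrow> mu > 0) \<and> (K = -1 \<longrightarrow> mu > - ell / (3 * sqrt 3))"
    and r0_pos: "r0 > 0"
    and r0_zero: "fBH ell K mu r0 = 0"
    and r0_largest: "\<forall>r>r0. fBH ell K mu r > 0"
    and k_pos: "k > 0"
    and k_big: "k^2 > max 0 (2 * K)"
    and u_cont: "continuous_on UNIV u"
    and U_def: "\<forall>p. U p = u (polar_chart ell K mu r0 p)"
    and U_C2: "C2_partials_on ({r0<..} \<times> UNIV) U Ur Ut Urr Urt Utr Utt"
    and U_eq: "\<forall>r t. r > r0 \<longrightarrow>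
        - (deriv (fBH ell K mu) r * Ur (r, t) + fBH ell K mu r * Urr (r, t)
           + Utt (r, t) / fBH ell K mu r)
        + VSk ell K mu k r * U (r, t) = 0"
    and U_L2: "set_integrable lborel ({r0<..} \<times> {0..tperiod ell K mu r0}) (\<lambda>p. (U p)^2)"
  shows "\<forall>x. u x = 0"
proof -
  interpret bh_background ell mu K k r0
    using ell_pos K_range mu_cond r0_pos r0_zero r0_largest k_pos k_big by unfold_locales
  obtain B where "\<forall>r t. r0 \<le> r \<longrightarrow> r \<le> r0 + 1 \<longrightarrow> \<bar>u (polar_chart ell K mu r0 (r, t))\<bar> \<le> B"
    using polar_chart_bounded[OF u_cont] by blast
  then have U_bounded: "\<exists>B. \<forall>r t. r0 < r \<longrightarrow> r \<le> r0 + 1 \<longrightarrow> \<bar>U (r, t)\<bar> \<le> B"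
    using U_def by (intro exI[of _ B]) auto
  have U_periodic: "U (r, t + T) = U (r, t)" for r t
    using U_def polar_chart_periodic by simp
  interpret bh_solution ell mu K k r0 U Ur Ut Urr Urt Utr Utt
    by unfold_locales (fact U_periodic U_C2 U_eq U_L2 U_bounded)+
  have off_origin: "u x = 0" if x: "x \<noteq> 0" for x
  proof -
    obtain r t where "r > r0" "0 \<le> t" "t \<le> T" "polar_chart ell K mu r0 (r, t) = x"
      using polar_chart_surj[OF x] by blast
    then show ?thesis
      using U_zero[of r t] U_def by auto
  qed
  moreover have "u 0 = 0"
    using off_origin by (rule continuous_eq_const_off_point[OF u_cont])
  ultimately show ?thesis
    by (metis (full_types))
qed

end
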